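(* Consider the control-affine system $\dot{\boldsymbol{x}}=f(\boldsymbol{x})+g(\boldsymbol{x})\boldsymbol{u}$ with $\boldsymbol{x}\in\mathbb{R}^n$, $\boldsymbol{u}\in\mathbb{R}^q$, $f,g$ locally Lipschitz. Let $b:\mathbb{R}^n\to\mathbb{R}$ be an Auxiliary-Variable Adaptive Control Barrier Function (AVCBF) with minimum relative degree $\underline{m}$, built with $m_a\le \underline{m}$ positive auxiliary functions $\mathcal{A}_1,\dots,\mathcal{A}_{m_a}$, augmented state $\boldsymbol{Z}$, augmented input $\boldsymbol{V}$, functions $\psi_0,\dots,\psi_{m_a}$ and sets $\mathcal{C}_0,\dots,\mathcal{C}_{m_a-1}$ as described in the context. Suppose $\boldsymbol{Z}(0)\in \mathcal{C}_0\cap\dots\cap\mathcal{C}_{m_a-1}$. If there exists a Lipschitz controller $\boldsymbol{V}$ (taking values in $\mathcal{U}_{\boldsymbol{V}}(\boldsymbol{Z})$) that satisfies the AVCBF constraint $\psi_{m_a}(\boldsymbol{Z},\boldsymbol{V})\ge 0$ and also ensures $\boldsymbol{Z}(t)\in\mathcal{C}_{m_a-1}$ for all $t\ge 0$, then $\mathcal{C}_0\cap\dots\cap\mathcal{C}_{m_a-1}$ is forward invariant, i.e. $\boldsymbol{Z}(t)\in \mathcal{C}_0\cap\dots\cap\mathcal{C}_{m_a-1}$ for all $t\ge0$. Moreover, $b(\boldsymbol{x}(t))\ge 0$ for all $t\ge 0$.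
   Context: A class $\kappa$ function is a continuous, strictly increasing $\alpha:[0,a)\to[0,\infty]$ with $\alpha(0)=0$. Minimum relative degree $\underline{m}$ of $b$: the smallest number of differentiations of $b$ along $\dot{\boldsymbol{x}}=f+g\boldsymbol{u}$ after which at least one component of $\boldsymbol{u}$ appears explicitly. Auxiliary construction: fix an integer $1\le m_a\le\underline{m}$. For $i\in\{1,\dots,m_a\}$, let $a_i(t)$ be an auxiliary variable and $\boldsymbol{\pi}_i=(\pi_{i,1},\dots,\pi_{i,m_a+1-i})\in\mathbb{R}^{m_a+1-i}$ an auxiliary state with $\pi_{i,1}=a_i$, $\dot\pi_{i,j}=\pi_{i,j+1}$ for $j<m_a+1-i$, and $\dot\pi_{i,m_a+1-i}=\nu_i\in\mathbb{R}$ (an unbounded auxiliary input); write this as $\dot{\boldsymbol{\pi}}_i=F_i(\boldsymbol{\pi}_i)+G_i(\boldsymbol{\pi}_i)\nu_i$. The augmented systems are $\boldsymbol{z}_i=(\boldsymbol{x},\boldsymbol{\pi}_i)$, $\dot{\boldsymbol{z}}_i=\mathcal{F}_i(\boldsymbol{z}_i)+\mathcal{G}_i(\boldsymbol{z}_i)\boldsymbol{v}_i$ with $\mathcal{F}_i=(f,F_i)$, $\mathcal{G}_i=\mathrm{diag}(g,G_i)$, $\boldsymbol{v}_i=(\boldsymbol{u},\nu_i)$. Let $\boldsymbol{Z}=(\boldsymbol{z}_1,\dots,\boldsymbol{z}_{m_a})$ and $\boldsymbol{V}=(\boldsymbol{v}_1,\dots,\boldsymbol{v}_{m_a})$. Auxiliary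 functions $\mathcal{A}_i(\boldsymbol{x},a_i)$ are required to be positive; each is a HOCBF of relative degree $m_a+1-i$ for the $i$-th augmented system: with $\varphi_{i,0}=\mathcal{A}_i$, $\varphi_{i,j}=\dot\varphi_{i,j-1}+\alpha_{i,j}(\varphi_{i,j-1})$ ($j=1,\dots,m_a+1-i$, $\alpha_{i,j}$ sufficiently differentiable class $\kappa$ functions), sets $\mathcal{B}_{i,j}=\{\varphi_{i,j}>0\}$ for $j=0,\dots,m_a-i$, and the constraint $\varphi_{i,m_a+1-i}\ge\epsilon$ for a fixed constant $\epsilon>0$ being satisfiable on $\mathcal{B}_{i,0}\cap\dots\cap\mathcal{B}_{i,m_a-i}$. $\mathcal{U}_{\boldsymbol{V}}(\boldsymbol{Z})$ is the set of $\boldsymbol{V}$ with $\varphi_{i,m_a+1-i}\ge\epsilon$ for all $i=1,\dots,m_a$. AVCBF functions: $\psi_0(\boldsymbol{Z})=\mathcal{A}_1 b(\boldsymbol{x})$, $\psi_i(\boldsymbol{Z})=\mathcal{A}_{i+1}\big(\dot\psi_{i-1}(\boldsymbol{Z})+\alpha_i(\psi_{i-1}(\boldsymbol{Z}))\big)$ for $i=1,\dots,m_a-1$, and $\psi_{m_a}(\boldsymbol{Z},\boldsymbol{V})=\dot\psi_{m_a-1}(\boldsymbol{Z},\boldsymbol{V})+\alpha_{m_a}(\psi_{m_a-1}(\boldsymbol{Z}))$, where time derivatives are along the augmented dynamics, $\alpha_j$ ($j<m_a$) are $(m_a-j)$-times differentiable class $\kappa$ functions and $\alpha_{m_a}$ is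 class $\kappa$. Sets: $\mathcal{C}_i=\{\boldsymbol{Z}:\psi_i(\boldsymbol{Z})\ge0\}$, $i=0,\dots,m_a-1$. $b$ is an AVCBF if every $\mathcal{A}_i$ is such a HOCBF and $\sup_{\boldsymbol{V}\in\mathcal{U}_{\boldsymbol{V}}(\boldsymbol{Z})}\psi_{m_a}(\boldsymbol{Z},\boldsymbol{V})\ge0$ for all $\boldsymbol{Z}\in\mathcal{C}_0\cap\dots\cap\mathcal{C}_{m_a-1}$, with each $\mathcal{A}_i>0$. The inequality $\psi_{m_a}(\boldsymbol{Z},\boldsymbol{V})\ge 0$ is called the AVCBF constraint.
   Formalization: The class kappa functions $\alpha_i$ and $\alpha_{i,j}$ are extended ones, continuous and strictly increasing on all of the reals with $\alpha(0)=0$, and each $\psi_i$ and $\varphi_{i,j}$ is differentiable in t along the closed-loop trajectory. Each condition added here is assumed in the paper as well or is needed for the statement above to hold. *)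

theory Defs
  imports "HOL-Analysis.Analysis"
begin

definition ext_class_K :: "(real \<Rightarrow> real) \<Rightarrow> bool" where
  "ext_class_K \<alpha> \<longleftrightarrow> continuous_on UNIV \<alpha> \<and> strict_mono \<alpha> \<and> \<alpha> 0 = 0"

definition loc_lipschitz :: "('a::metric_space \<Rightarrow> 'b::metric_space) \<Rightarrow> bool" where
  "loc_lipschitz F \<longleftrightarrow> (\<forall>z. \<exists>r>0. \<exists>L. L-lipschitz_on (cball z r) F)"

fun phi_chain :: "(nat \<Rightarrow> real \<Rightarrow> real) \<Rightarrow> (real \<Rightarrow> real) \<Rightarrow> nat \<Rightarrow> real \<Rightarrow> real" where
  "phi_chain al h 0 = h"
| "phi_chain al h (Suc j) = (\<lambda>t. deriv (phi_chain al h j) t + al (Suc j) (phi_chain al h j t))"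

text \<open>AVCBF functions along a trajectory: Al i t = A_i(x(t), a_i(t)), bx t = b(x(t));
  psi_0 = A_1 b, psi_i = A_(i+1) (d/dt psi_(i-1) + alpha_i(psi_(i-1))) for i < m_a,
  psi_(m_a) = d/dt psi_(m_a-1) + alpha_(m_a)(psi_(m_a-1)).\<close>
fun avcbf_psi :: "nat \<Rightarrow> (nat \<Rightarrow> real \<Rightarrow> real) \<Rightarrow> (real \<Rightarrow> real) \<Rightarrow> (nat \<Rightarrow> real \<Rightarrow> real)
    \<Rightarrow> nat \<Rightarrow> real \<Rightarrow> real" where
  "avcbf_psi ma Al bx al 0 = (\<lambda>t. Al 1 t * bx t)"
| "avcbf_psi ma Al bx al (Suc i) =
     (\<lambda>t. (if Suc i < ma then Al (i + 2) t else 1) *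
          (deriv (avcbf_psi ma Al bx al i) t + al (Suc i) (avcbf_psi ma Al bx al i t)))"

text \<open>psi_i(Z(t)) for the augmented trajectory with state x and auxiliary states pi
  (pi i j t = pi_{i,j}(t), so a_i(t) = pi i 1 t).\<close>
definition psi_traj :: "nat \<Rightarrow> (nat \<Rightarrow> 'x \<Rightarrow> real \<Rightarrow> real) \<Rightarrow> ('x \<Rightarrow> real)
    \<Rightarrow> (nat \<Rightarrow> real \<Rightarrow> real) \<Rightarrow> (real \<Rightarrow> 'x) \<Rightarrow> (nat \<Rightarrow> nat \<Rightarrow> real \<Rightarrow> real)
    \<Rightarrow> nat \<Rightarrow> real \<Rightarrow> real" where
  "psi_traj ma A b al x p = avcbf_psi ma (\<lambda>i t. A i (x t) (p i 1 t)) (\<lambda>t. b (x t)) al"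

end

theory Submission
  imports Defs
begin

text \<open>Since \<open>\<psi>\<^sub>i\<^sub>+\<^sub>1 = \<A>\<^sub>i\<^sub>+\<^sub>2 (\<psi>\<^sub>i' + \<alpha>\<^sub>i\<^sub>+\<^sub>1(\<psi>\<^sub>i))\<close> with \<open>\<A>\<^sub>i\<^sub>+\<^sub>2 > 0\<close>,
  nonnegativity of \<open>\<psi>\<^sub>i\<^sub>+\<^sub>1\<close> gives \<open>\<psi>\<^sub>i' \<ge> -\<alpha>\<^sub>i\<^sub>+\<^sub>1(\<psi>\<^sub>i)\<close>. A comparison argument then
  shows that \<open>\<psi>\<^sub>i\<close> cannot leave \<open>[0, \<infinity>)\<close>: after the last time it is nonnegative it
  would have to decrease, yet \<open>\<psi>\<^sub>i < 0\<close> forces \<open>\<psi>\<^sub>i' > 0\<close>. Descending from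
  \<open>\<psi>\<^sub>m\<^sub>a\<^sub>-\<^sub>1 \<ge> 0\<close> to \<open>\<psi>\<^sub>0 = \<A>\<^sub>1 b\<close> yields all the invariance claims, and \<open>b \<ge> 0\<close>
  since \<open>\<A>\<^sub>1 > 0\<close>.\<close>

lemma ext_class_K_neg:
  assumes "ext_class_K a" and "y < 0"
  shows "a y < 0"
  using assms unfolding ext_class_K_def by (metis strict_mono_less)

lemma forward_invariant_nonneg:
  fixes \<psi> a :: "real \<Rightarrow> real"
  assumes a_neg: "\<And>y. y < 0 \<Longrightarrow> a y < 0"
    and diff: "\<And>t. t \<ge> 0 \<Longrightarrow> \<psi> differentiable (at t)"
    and deriv_ge: "\<And>t. t \<ge> 0 \<Longrightarrow> deriv \<psi> t + a (\<psi> t) \<ge> 0"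
    and init: "\<psi> 0 \<ge> 0" and "t \<ge> 0"
  shows "\<psi> t \<ge> 0"
proof (rule ccontr)
  assume "\<not> \<psi> t \<ge> 0"
  then have t_neg: "\<psi> t < 0" by simp
  have cont: "continuous_on {0..t} \<psi>"
    using diff by (intro continuous_at_imp_continuous_on) (auto intro: differentiable_imp_continuous_within)
  define S where "S = {0..t} \<inter> \<psi> -` {0..}"
  have "closed S"
    unfolding S_def by (rule continuous_closed_preimage[OF cont]) auto
  moreover have "0 \<in> S" and bdd: "bdd_above S"
    using init \<open>t \<ge> 0\<close> by (auto simp: S_def intro: bdd_aboveI[of _ t])
  ultimately have "Sup S \<in> S"
    using closed_contains_Sup by blast
  then obtain s where s: "s = Sup S" "0 \<le> s" "s \<le> t" "\<psi> s \<ge> 0"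
    by (auto simp: S_def)
  have neg_after_s: "\<psi> y < 0" if "s < y" "y \<le> t" for y
    using cSup_upper[OF _ bdd, of y] that s by (force simp: S_def)
  have "s < t"
    using s t_neg by (cases "s = t") auto
  moreover have "continuous_on {s..t} \<psi>"
    using s by (intro continuous_on_subset[OF cont]) auto
  ultimately obtain l z where z: "s < z" "z < t" "DERIV \<psi> z :> l" "\<psi> t - \<psi> s = (t - s) * l"
    using MVT[of s t \<psi>] diff s by force
  have "l = deriv \<psi> z"
    using z(3) by (simp add: DERIV_imp_deriv)
  moreover have "a (\<psi> z) < 0"
    using a_neg neg_after_s z by auto
  moreover have "deriv \<psi> z + a (\<psi> z) \<ge> 0"
    using deriv_ge z s by auto
  ultimately have "\<psi> t - \<psi> s > 0"
    using z \<open>s < t\<close> by simp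
  with s t_neg show False by simp
qed

lemma chain_nonneg_backward:
  fixes \<psi> :: "nat \<Rightarrow> real \<Rightarrow> real" and a :: "nat \<Rightarrow> real \<Rightarrow> real"
  assumes top: "\<And>t. t \<ge> 0 \<Longrightarrow> \<psi> n t \<ge> 0"
    and K: "\<And>i. i < n \<Longrightarrow> ext_class_K (a (Suc i))"
    and diff: "\<And>i t. i < n \<Longrightarrow> t \<ge> 0 \<Longrightarrow> \<psi> i differentiable (at t)"
    and init: "\<And>i. i < n \<Longrightarrow> \<psi> i 0 \<ge> 0"
    and deriv_step: "\<And>i t. i < n \<Longrightarrow> t \<ge> 0 \<Longrightarrow> \<psi> (Suc i) t \<ge> 0
                 \<Longrightarrow> deriv (\<psi> i) t + a (Suc i) (\<psi> i t) \<ge> 0"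
    and "i \<le> n" and "t \<ge> 0"
  shows "\<psi> i t \<ge> 0"
  using \<open>i \<le> n\<close> \<open>t \<ge> 0\<close>
proof (induction i arbitrary: t rule: inc_induct)
  case base
  then show ?case by (rule top)
next
  case (step i)
  then have "i < n" by simp
  show ?case
  proof (rule forward_invariant_nonneg[where \<psi> = "\<psi> i" and a = "a (Suc i)"])
    show "a (Suc i) y < 0" if "y < 0" for y
      using ext_class_K_neg[OF K[OF \<open>i < n\<close>] that] .
    show "\<psi> i differentiable (at s)" if "s \<ge> 0" for s
      using diff[OF \<open>i < n\<close> that] .
    show "deriv (\<psi> i) s + a (Suc i) (\<psi> i s) \<ge> 0" if "s \<ge> 0" for s
      using deriv_step[OF \<open>i < n\<close> that step.IH[OF that]] .
  qed (use init[OF \<open>i < n\<close>] step.prems in auto)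
qed

lemma psi_traj_0: "psi_traj ma A b \<alpha> x p 0 t = A 1 (x t) (p 1 1 t) * b (x t)"
  by (simp add: psi_traj_def)

lemma psi_traj_Suc:
  assumes "Suc i < ma"
  shows "psi_traj ma A b \<alpha> x p (Suc i) t
           = A (i + 2) (x t) (p (i + 2) 1 t)
             * (deriv (psi_traj ma A b \<alpha> x p i) t + \<alpha> (Suc i) (psi_traj ma A b \<alpha> x p i t))"
  using assms by (simp add: psi_traj_def)

text \<open>Only \<open>A_pos\<close>, \<open>alpha_K\<close>, \<open>psi_diff\<close>, \<open>in_C_last\<close> and \<open>init\<close> are used: the
  dynamics, Lipschitz and HOCBF hypotheses merely make these attainable, and
  \<open>avcbf_constraint\<close> is superseded by the assumed invariance of \<open>\<C>\<^sub>m\<^sub>a\<^sub>-\<^sub>1\<close>.\<close>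

theorem theorem2:
  fixes f :: "real^'n \<Rightarrow> real^'n" and g :: "real^'n \<Rightarrow> real^'q^'n"
    and b :: "real^'n \<Rightarrow> real"
    and ma :: nat
    and A :: "nat \<Rightarrow> real^'n \<Rightarrow> real \<Rightarrow> real"
    and \<alpha> :: "nat \<Rightarrow> real \<Rightarrow> real"
    and \<alpha>A :: "nat \<Rightarrow> nat \<Rightarrow> real \<Rightarrow> real"
    and \<epsilon> :: real
    and x :: "real \<Rightarrow> real^'n" and u :: "real \<Rightarrow> real^'q"
    and p :: "nat \<Rightarrow> nat \<Rightarrow> real \<Rightarrow> real" and \<nu> :: "nat \<Rightarrow> real \<Rightarrow> real"
  assumes ma_pos: "1 \<le> ma"
    and f_lip: "loc_lipschitz f" and g_lip: "loc_lipschitz g"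
    and alpha_K: "\<forall>i\<in>{1..ma}. ext_class_K (\<alpha> i)"
    and alphaA_K: "\<forall>i\<in>{1..ma}. \<forall>j\<in>{1..ma + 1 - i}. ext_class_K (\<alpha>A i j)"
    and eps_pos: "\<epsilon> > 0"
    and u_cont: "continuous_on {0..} u"
    and nu_cont: "\<forall>i\<in>{1..ma}. continuous_on {0..} (\<nu> i)"
    and x_ode: "\<forall>t\<ge>0. (x has_vector_derivative (f (x t) + g (x t) *v u t)) (at t within {0..})"
    and p_ode: "\<forall>i\<in>{1..ma}. \<forall>j\<in>{1..<ma + 1 - i}. \<forall>t\<ge>0.
                  (p i j has_real_derivative p i (Suc j) t) (at t within {0..})"
    and p_ode_last: "\<forall>i\<in>{1..ma}. \<forall>t\<ge>0.
                  (p i (ma + 1 - i) has_real_derivative \<nu> i t) (at t within {0..})"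
    and A_pos: "\<forall>i\<in>{1..ma}. \<forall>t\<ge>0. A i (x t) (p i 1 t) > 0"
    and psi_diff: "\<forall>i<ma. \<forall>t\<ge>0. psi_traj ma A b \<alpha> x p i differentiable (at t)"
    and phi_diff: "\<forall>i\<in>{1..ma}. \<forall>j<ma + 1 - i. \<forall>t\<ge>0.
                  phi_chain (\<alpha>A i) (\<lambda>t. A i (x t) (p i 1 t)) j differentiable (at t)"
    and V_admissible: "\<forall>i\<in>{1..ma}. \<forall>t\<ge>0.
                  phi_chain (\<alpha>A i) (\<lambda>t. A i (x t) (p i 1 t)) (ma + 1 - i) t \<ge> \<epsilon>"
    and avcbf_constraint: "\<forall>t\<ge>0. psi_traj ma A b \<alpha> x p ma t \<ge> 0"
    and in_C_last: "\<forall>t\<ge>0. psi_traj ma A b \<alpha> x p (ma - 1) t \<ge> 0"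
    and init: "\<forall>i<ma. psi_traj ma A b \<alpha> x p i 0 \<ge> 0"
  shows "(\<forall>t\<ge>0. \<forall>i<ma. psi_traj ma A b \<alpha> x p i t \<ge> 0) \<and> (\<forall>t\<ge>0. b (x t) \<ge> 0)"
proof -
  let ?\<psi> = "psi_traj ma A b \<alpha> x p"
  have step: "deriv (?\<psi> i) t + \<alpha> (Suc i) (?\<psi> i t) \<ge> 0"
    if "Suc i < ma" "t \<ge> 0" "?\<psi> (Suc i) t \<ge> 0" for i t
  proof -
    have "A (i + 2) (x t) (p (i + 2) 1 t) > 0"
      using A_pos that(1,2) by simp
    then show ?thesis
      using that(3) by (simp add: psi_traj_Suc[OF that(1)] zero_le_mult_iff)
  qed
  have invariant: "\<forall>t\<ge>0. \<forall>i<ma. ?\<psi> i t \<ge> 0"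
  proof (intro allI impI)
    fix t :: real and i assume "t \<ge> 0" "i < ma"
    show "?\<psi> i t \<ge> 0"
    proof (rule chain_nonneg_backward[where \<psi> = ?\<psi> and n = "ma - 1" and a = \<alpha>])
      show "\<And>i. i < ma - 1 \<Longrightarrow> ext_class_K (\<alpha> (Suc i))"
        using alpha_K by simp
    qed (use in_C_last psi_diff init step \<open>t \<ge> 0\<close> \<open>i < ma\<close> in simp_all)
  qed
  moreover have "b (x t) \<ge> 0" if "t \<ge> 0" for t
  proof -
    have "A 1 (x t) (p 1 1 t) * b (x t) \<ge> 0"
      using invariant that ma_pos by (metis psi_traj_0 less_le_trans zero_less_one)
    moreover have "A 1 (x t) (p 1 1 t) > 0"
      using A_pos that ma_pos by simp
    ultimately show ?thesis
      by (simp add: zero_le_mult_iff)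
  qed
  ultimately show ?thesis by blast
qed

end
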